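(* For any cardinal $\kappa\ge\omega$ and integer $d\ge2$, $w\chi_{\rm CF}(\kappa,\kappa,d)=\left\lfloor d/2\right\rfloor+1$.
   Context: A weak conflict free coloring of a family $\mathcal A$ with $\rho$ colors is a function $f$ with $\operatorname{dom}(f)\subseteq\bigcup\mathcal A$, values in $\rho$, such that every $A\in\mathcal A$ has some $\zeta<\rho$ with $|A\cap f^{-1}\{\zeta\}|=1$; $w\chi_{\rm CF}(\mathcal A)$ is the least such $\rho$. A $(\lambda,\kappa,\mu)$-system is a family of $\lambda$ sets each of size $\kappa$, distinct members meeting in fewer than $\mu$ points; $w\chi_{\rm CF}(\lambda,\kappa,\mu)$ is the supremum of $w\chi_{\rm CF}(\mathcal A)$ over all $(\lambda,\kappa,\mu)$-systems. *)

theory Defs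
  imports "HOL-Library.Extended_Nat"
begin

unbundle cardinal_syntax

definition wCF_coloring :: "'a set set \<Rightarrow> nat \<Rightarrow> ('a \<rightharpoonup> nat) \<Rightarrow> bool" where
  "wCF_coloring \<A> \<rho> f \<longleftrightarrow>
     dom f \<subseteq> \<Union>\<A> \<and> ran f \<subseteq> {..<\<rho>} \<and>
     (\<forall>A\<in>\<A>. \<exists>\<zeta><\<rho>. card (A \<inter> {x. f x = Some \<zeta>}) = 1)"

definition wCF_colorable :: "'a set set \<Rightarrow> nat \<Rightarrow> bool" where
  "wCF_colorable \<A> \<rho> \<longleftrightarrow> (\<exists>f. wCF_coloring \<A> \<rho> f)"

text \<open>The weak conflict free chromatic number; all infinite values are collapsed to \<infinity>.\<close>
definition wchi_CF :: "'a set set \<Rightarrow> enat" where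
  "wchi_CF \<A> = (if \<exists>n. wCF_colorable \<A> n then enat (LEAST n. wCF_colorable \<A> n) else \<infinity>)"

definition lkm_system :: "'a set set \<Rightarrow> 'l rel \<Rightarrow> 'k rel \<Rightarrow> nat \<Rightarrow> bool" where
  "lkm_system \<A> lam \<kappa> \<mu> \<longleftrightarrow>
     |\<A>| =o lam \<and> (\<forall>A\<in>\<A>. |A| =o \<kappa>) \<and>
     (\<forall>A\<in>\<A>. \<forall>B\<in>\<A>. A \<noteq> B \<longrightarrow> finite (A \<inter> B) \<and> card (A \<inter> B) < \<mu>)"

definition wchi_CF_sys :: "'a itself \<Rightarrow> 'l rel \<Rightarrow> 'k rel \<Rightarrow> nat \<Rightarrow> enat" where
  "wchi_CF_sys _ lam \<kappa> \<mu> = (SUP \<A> \<in> {\<A> :: 'a set set. lkm_system \<A> lam \<kappa> \<mu>}. wchi_CF \<A>)"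

end

theory Submission
  imports Defs
begin

text \<open>Well-order a \<open>(\<kappa>,\<kappa>,d)\<close>-system so that every member has fewer than \<open>\<kappa>\<close>
  predecessors. By transfinite recursion choose in each member \<open>A\<close> a representative \<open>x A\<close>
  lying in no earlier member and in no member that already contains \<open>d\<close> earlier representatives;
  the latter members are fewer than \<open>\<kappa>\<close> because they pairwise share fewer than \<open>d\<close> points.
  Then a member \<open>B\<close> contains no later representative and at most \<open>d \<le> 2k + 1\<close> earlier ones.
  Colouring only the representatives, again along the well-order, with \<open>k + 1\<close> colours, a
  pigeonhole argument lets the colour of \<open>x B\<close> be chosen so that some colour occurs exactly once
  in \<open>B\<close>.

  On \<open>\<kappa> \<times> \<kappa>\<close> the member indexed by \<open>\<alpha>\<close> is the tail \<open>{\<alpha>} \<times> [\<alpha>, \<kappa>)\<close> together with a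
  finite set of points with second coordinate below \<open>\<alpha>\<close>. Enumerating every finite set cofinally
  often, the finite parts are chosen so that any set \<open>T\<close> of at most \<open>2k\<close> points, which has to
  avoid a finite \<open>P\<close> unless \<open>|T| = 2k\<close>, lies in some member missing \<open>P\<close>, while distinct members
  still share fewer than \<open>2k\<close> points. Given a colouring with \<open>k\<close> colours, taking two points of
  every colour class with at least two points for \<open>T\<close> and the small classes for \<open>P\<close> yields
  a member meeting every colour class in zero or at least two points.\<close>

section \<open>Cardinal arithmetic\<close>

lemma finite_card_of_ordLess_infinite: "finite X \<Longrightarrow> infinite K \<Longrightarrow> |X| <o |K|"
  by (rule finite_ordLess_infinite) (auto simp: card_of_well_order_on Field_card_of)

lemma card_of_UN_finite_ordLess:
  assumes K: "infinite K" and I: "|I| <o |K|" and fin: "\<And>i. i \<in> I \<Longrightarrow> finite (X i)"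
  shows "|\<Union>i\<in>I. X i| <o |K|"
proof (cases "finite I")
  case True
  then show ?thesis using fin K by (intro finite_card_of_ordLess_infinite) auto
next
  case False
  have "|\<Union>i\<in>I. X i| \<le>o |I|"
    using False fin by (intro card_of_UNION_ordLeq_infinite)
      (auto intro: ordLess_imp_ordLeq finite_card_of_ordLess_infinite ordLeq_reflexive card_of_Well_order)
  then show ?thesis using I ordLeq_ordLess_trans by blast
qed

lemma card_of_finite_UN_ordLess:
  assumes K: "infinite K" and Q: "finite Q" and small: "\<And>q. q \<in> Q \<Longrightarrow> |X q| <o |K|"
  shows "|\<Union>q\<in>Q. X q| <o |K|"
  using Q small
proof (induction Q rule: finite_induct)
  case empty
  then show ?case using finite_card_of_ordLess_infinite[OF _ K, of "{}"] by simp
next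
  case (insert q Q)
  then show ?case using card_of_Un_ordLess_infinite[OF K, of "X q" "\<Union>(X ` Q)"] by simp
qed

lemma card_of_Fpow_ordLeq_infinite:
  assumes S: "infinite S"
  shows "|Fpow S| \<le>o |S|"
proof -
  have layer: "|{F \<in> Fpow S. card F = n}| \<le>o |S|" for n
  proof (induction n)
    case 0
    have "{F \<in> Fpow S. card F = 0} = {{}}" using S by (auto simp: Fpow_def)
    then show ?case using S by (simp add: card_of_singl_ordLeq infinite_imp_nonempty)
  next
    case (Suc n)
    have "{F \<in> Fpow S. card F = Suc n} \<subseteq> (\<lambda>(x, G). insert x G) ` (S \<times> {F \<in> Fpow S. card F = n})"
    proof
      fix F assume "F \<in> {F \<in> Fpow S. card F = Suc n}"
      then obtain x where "x \<in> F" "F \<subseteq> S" "finite F" "card F = Suc n"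
        by (auto simp: Fpow_def card_Suc_eq)
      then show "F \<in> (\<lambda>(x, G). insert x G) ` (S \<times> {F \<in> Fpow S. card F = n})"
        by (intro image_eqI[of _ _ "(x, F - {x})"]) (auto simp: Fpow_def)
    qed
    moreover have "|S \<times> {F \<in> Fpow S. card F = n}| \<le>o |S|"
      using S Suc by (intro card_of_Times_ordLeq_infinite_Field)
        (auto simp: Field_card_of card_of_Card_order card_of_card_order_on
          intro: ordLeq_reflexive card_of_Well_order)
    ultimately show ?case using surj_imp_ordLeq ordLeq_transitive by blast
  qed
  have "Fpow S = (\<Union>n. {F \<in> Fpow S. card F = n})" by auto
  moreover have "|\<Union>n. {F \<in> Fpow S. card F = n}| \<le>o |S|"
    using S layer S[unfolded infinite_iff_card_of_nat]
    by (intro card_of_UNION_ordLeq_infinite) auto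
  ultimately show ?thesis by simp
qed

lemma card_of_Fpow_ordLess_infinite:
  assumes K: "infinite K" and S: "|S| <o |K|"
  shows "|Fpow S| <o |K|"
proof (cases "finite S")
  case True
  then show ?thesis using finite_card_of_ordLess_infinite[OF _ K]
    by (metis Fpow_subset_Pow finite_Pow_iff finite_subset)
next
  case False
  then show ?thesis using card_of_Fpow_ordLeq_infinite S ordLeq_ordLess_trans by blast
qed

lemma ex_mem_not_in_smaller:
  assumes "|A| =o |K|" and "|R| <o |K|"
  shows "\<exists>x\<in>A. x \<notin> R"
proof (rule ccontr)
  assume "\<not> ?thesis"
  then have "|A| \<le>o |R|" by (intro card_of_mono1) auto
  then show False using assms not_ordLess_ordIso ordLeq_ordLess_trans by blast
qed

lemma ex_mem_avoiding_finite_traces: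
  assumes K: "infinite K" and A: "|A| =o |K|" and \<B>: "|\<B>| <o |K|"
    and fin: "\<And>B. B \<in> \<B> \<Longrightarrow> finite (A \<inter> B)"
  shows "\<exists>y\<in>A. \<forall>B\<in>\<B>. y \<notin> B"
proof -
  have "|\<Union>B\<in>\<B>. A \<inter> B| <o |K|" using card_of_UN_finite_ordLess[OF K \<B>] fin .
  then show ?thesis using ex_mem_not_in_smaller[OF A] by blast
qed

lemma card_of_almost_disjoint_ordLeq_Fpow:
  assumes big: "\<And>B. B \<in> \<B> \<Longrightarrow> \<exists>F\<subseteq>B \<inter> S. finite F \<and> card F = d"
    and small: "\<And>B B'. B \<in> \<B> \<Longrightarrow> B' \<in> \<B> \<Longrightarrow> B \<noteq> B' \<Longrightarrow> finite (B \<inter> B') \<and> card (B \<inter> B') < d"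
  shows "|\<B>| \<le>o |Fpow S|"
proof -
  obtain \<phi> where \<phi>: "\<And>B. B \<in> \<B> \<Longrightarrow> \<phi> B \<subseteq> B \<inter> S \<and> finite (\<phi> B) \<and> card (\<phi> B) = d"
    using big by metis
  have "inj_on \<phi> \<B>"
  proof (rule inj_onI, rule ccontr)
    fix B B' assume B: "B \<in> \<B>" "B' \<in> \<B>" "\<phi> B = \<phi> B'" "B \<noteq> B'"
    then have "\<phi> B \<subseteq> B \<inter> B'" using \<phi> by blast
    then have "card (\<phi> B) < d" using small[OF B(1,2,4)] by (meson card_mono le_less_trans)
    then show False using \<phi>[OF B(1)] by simp
  qed
  moreover have "\<phi> ` \<B> \<subseteq> Fpow S" using \<phi> by (auto simp: Fpow_def)
  ultimately show ?thesis using card_of_ordLeq by blast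
qed

section \<open>Well-founded recursion and strict well-orders\<close>

lemma wf_rec_choice:
  assumes "wf R"
    and ex: "\<And>f x. \<exists>y. P f x y"
    and cong: "\<And>f g x y. (\<And>z. (z, x) \<in> R \<Longrightarrow> f z = g z) \<Longrightarrow> P f x y = P g x y"
  shows "\<exists>g. \<forall>x. P g x (g x)"
proof -
  define g where "g = wfrec R (\<lambda>f x. SOME y. P f x y)"
  have "P g x (g x)" for x
  proof -
    have "g x = (SOME y. P (cut g R x) x y)" by (simp add: g_def wfrec[OF \<open>wf R\<close>])
    then have "P (cut g R x) x (g x)" using someI_ex[OF ex] by simp
    then show ?thesis using cong[of x "cut g R x" g] by (simp add: cut_apply)
  qed
  then show ?thesis by blast
qed

definition strict_wellorder_on :: "'b set \<Rightarrow> 'b rel \<Rightarrow> bool" where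
  "strict_wellorder_on X R \<longleftrightarrow>
     wf R \<and> R \<subseteq> X \<times> X \<and> (\<forall>a\<in>X. \<forall>b\<in>X. a \<noteq> b \<longrightarrow> (a, b) \<in> R \<or> (b, a) \<in> R)"

lemma strict_wellorder_on_Well_order:
  assumes "Well_order r"
  shows "strict_wellorder_on (Field r) (r - Id)"
  using assms unfolding strict_wellorder_on_def
  by (auto simp: well_order_on_def linear_order_on_def total_on_def dest: FieldI1 FieldI2)

lemma strict_wellorder_on_finite_has_max:
  assumes R: "strict_wellorder_on X R" and "G \<subseteq> X" and "finite G" and "G \<noteq> {}"
  shows "\<exists>m\<in>G. \<forall>a\<in>G - {m}. (a, m) \<in> R"
proof -
  have "wf R" using R by (simp add: strict_wellorder_on_def)
  have total: "(a, b) \<in> R \<or> (b, a) \<in> R" if "a \<in> G" "b \<in> G" "a \<noteq> b" for a b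
    using R that \<open>G \<subseteq> X\<close> by (auto simp: strict_wellorder_on_def)
  let ?S = "{(a, b). (b, a) \<in> R \<and> a \<in> G \<and> b \<in> G}"
  have "acyclic (R\<inverse>)" using wf_acyclic[OF \<open>wf R\<close>] by simp
  then have "acyclic ?S" by (rule acyclic_subset) auto
  have "?S \<subseteq> G \<times> G" by auto
  then have "finite ?S" using \<open>finite G\<close> by (blast intro: finite_subset)
  then have "wf ?S" using \<open>acyclic ?S\<close> by (rule finite_acyclic_wf)
  obtain m where m: "m \<in> G" "\<And>a. (a, m) \<in> ?S \<Longrightarrow> a \<notin> G"
  proof (rule wfE_min'[OF \<open>wf ?S\<close> \<open>G \<noteq> {}\<close>])
    fix z assume "z \<in> G" "\<And>a. (a, z) \<in> ?S \<Longrightarrow> a \<notin> G"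
    then show thesis by (rule that)
  qed
  show ?thesis
  proof (intro bexI[OF _ m(1)] ballI)
    fix a assume a: "a \<in> G - {m}"
    then have "(m, a) \<notin> R" using m by blast
    then show "(a, m) \<in> R" using total[of a m] a m(1) by blast
  qed
qed

lemma ex_strict_wellorder_small_predecessors:
  assumes "|\<A>| =o |K|"
  shows "\<exists>R. strict_wellorder_on \<A> R \<and> (\<forall>A\<in>\<A>. ( |{B. (B, A) \<in> R}| <o |K| ))"
proof (intro exI conjI ballI)
  let ?W = "|\<A>|"
  have W: "Well_order ?W" "Field ?W = \<A>" "Card_order ?W"
    by (auto simp: card_of_well_order_on card_of_card_order_on Field_card_of)
  show "strict_wellorder_on \<A> (?W - Id)" using strict_wellorder_on_Well_order[OF W(1)] W(2) by simp
  show "|{B. (B, A) \<in> ?W - Id}| <o |K|" if "A \<in> \<A>" for A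
  proof -
    have "{B. (B, A) \<in> ?W - Id} = underS ?W A" by (auto simp: underS_def)
    then show ?thesis using card_of_underS[OF W(3)] that W(2) assms ordLess_ordIso_trans by metis
  qed
qed

section \<open>The upper bound\<close>

lemma ex_color_class_card_less_2:
  assumes "finite E" and "card E < 2 * n"
  shows "\<exists>i<n. card {a \<in> E. c a = i} < 2"
proof (rule ccontr)
  assume no_small: "\<not> ?thesis"
  have "2 \<le> card {a \<in> E. c a = i}" if "i < n" for i using no_small that by (meson not_less)
  then have "(\<Sum>i<n. 2) \<le> (\<Sum>i<n. card {a \<in> E. c a = i})" by (intro sum_mono) simp
  then have "2 * n \<le> (\<Sum>i<n. card {a \<in> E. c a = i})" by (simp add: mult.commute)
  also have "\<dots> = card (\<Union>i<n. {a \<in> E. c a = i})"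
    using \<open>finite E\<close> by (intro card_UN_disjoint[symmetric]) auto
  also have "\<dots> \<le> card E" using \<open>finite E\<close> by (intro card_mono) auto
  finally show False using assms(2) by simp
qed

lemma ex_color_unique_in_insert:
  assumes "finite E" and "card E \<le> 2 * k + 1" and "1 \<le> k" and "b \<notin> E"
  shows "\<exists>cb\<le>k. \<exists>\<zeta>\<le>k. card {a \<in> insert b E. (c(b := cb)) a = \<zeta>} = 1"
proof -
  obtain i where i: "i \<le> k" "card {a \<in> E. c a = i} < 2"
    using ex_color_class_card_less_2[OF assms(1), of "Suc k" c] assms(2) less_Suc_eq_le by auto
  show ?thesis
  proof (cases "card {a \<in> E. c a = i} = 0")
    case True
    then have "{a \<in> E. c a = i} = {}" using assms(1) by simp
    then have "{a \<in> insert b E. (c(b := i)) a = i} = {b}" using assms(4) by auto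
    then show ?thesis using i(1) by (intro exI[of _ i] conjI) auto
  next
    case False
    define cb where "cb = (if i = 0 then 1 else 0 :: nat)"
    have "cb \<le> k" "cb \<noteq> i" using assms(3) by (auto simp: cb_def)
    then have "{a \<in> insert b E. (c(b := cb)) a = i} = {a \<in> E. c a = i}" using assms(4) by auto
    moreover have "card {a \<in> E. c a = i} = 1" using False i(2) by simp
    ultimately show ?thesis using \<open>cb \<le> k\<close> i(1) by (intro exI[of _ cb] exI[of _ i] conjI) auto
  qed
qed

lemma wCF_colorable_of_transversal:
  assumes inj: "inj_on x \<A>" and x: "\<And>A. A \<in> \<A> \<Longrightarrow> x A \<in> A"
    and c: "\<And>A. A \<in> \<A> \<Longrightarrow> c A < \<rho>"
    and unique: "\<And>B. B \<in> \<A> \<Longrightarrow> \<exists>\<zeta><\<rho>. card {A \<in> \<A>. x A \<in> B \<and> c A = \<zeta>} = 1"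
  shows "wCF_colorable \<A> \<rho>"
proof -
  define f where "f y = (if y \<in> x ` \<A> then Some (c (inv_into \<A> x y)) else None)" for y
  have color_class: "B \<inter> {y. f y = Some \<zeta>} = x ` {A \<in> \<A>. x A \<in> B \<and> c A = \<zeta>}" for B \<zeta>
    using inj by (auto simp: f_def inv_into_f_f inj_on_eq_iff)
  have "wCF_coloring \<A> \<rho> f"
    unfolding wCF_coloring_def
  proof (intro conjI ballI)
    show "dom f \<subseteq> \<Union>\<A>" using x by (auto simp: f_def dom_def)
    show "ran f \<subseteq> {..<\<rho>}" using c by (auto simp: f_def ran_def inv_into_into)
  next
    fix B assume "B \<in> \<A>"
    then obtain \<zeta> where "\<zeta> < \<rho>" "card {A \<in> \<A>. x A \<in> B \<and> c A = \<zeta>} = 1" using unique by blast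
    moreover have "inj_on x {A \<in> \<A>. x A \<in> B \<and> c A = \<zeta>}" using inj by (rule inj_on_subset) auto
    ultimately show "\<exists>\<zeta><\<rho>. card (B \<inter> {y. f y = Some \<zeta>}) = 1" by (auto simp: color_class card_image)
  qed
  then show ?thesis unfolding wCF_colorable_def by blast
qed

definition fresh_transversal :: "'a set set \<Rightarrow> 'a set rel \<Rightarrow> ('a set \<Rightarrow> 'a) \<Rightarrow> bool" where
  "fresh_transversal \<A> R x \<longleftrightarrow> (\<forall>A\<in>\<A>. x A \<in> A) \<and> (\<forall>A B. (B, A) \<in> R \<longrightarrow> x A \<notin> B)"

definition earlier_hits :: "'a set rel \<Rightarrow> ('a set \<Rightarrow> 'a) \<Rightarrow> 'a set \<Rightarrow> 'a set set" where
  "earlier_hits R x B = {A. (A, B) \<in> R \<and> x A \<in> B}"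

lemma inj_on_fresh_transversal:
  assumes R: "strict_wellorder_on \<A> R" and x: "fresh_transversal \<A> R x"
  shows "inj_on x \<A>"
proof (rule inj_onI, rule ccontr)
  fix A B assume AB: "A \<in> \<A>" "B \<in> \<A>" "x A = x B" "A \<noteq> B"
  then have "(A, B) \<in> R \<or> (B, A) \<in> R" using R by (simp add: strict_wellorder_on_def)
  moreover have "x A \<in> A" "x B \<in> B" "(A, B) \<in> R \<Longrightarrow> x B \<notin> A" "(B, A) \<in> R \<Longrightarrow> x A \<notin> B"
    using x AB(1,2) by (simp_all add: fresh_transversal_def)
  ultimately show False using AB(3) by auto
qed

lemma fresh_transversal_hits:
  assumes R: "strict_wellorder_on \<A> R" and x: "fresh_transversal \<A> R x" and B: "B \<in> \<A>"
  shows "{A \<in> \<A>. x A \<in> B} = insert B (earlier_hits R x B)"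
proof (intro set_eqI iffI)
  fix A assume "A \<in> {A \<in> \<A>. x A \<in> B}"
  then have A: "A \<in> \<A>" "x A \<in> B" by auto
  show "A \<in> insert B (earlier_hits R x B)"
  proof (cases "A = B")
    case False
    then have "(A, B) \<in> R \<or> (B, A) \<in> R" using R A(1) B by (simp add: strict_wellorder_on_def)
    then have "(A, B) \<in> R" using x A(2) by (auto simp: fresh_transversal_def)
    then show ?thesis using A(2) by (simp add: earlier_hits_def)
  qed simp
next
  fix A assume A: "A \<in> insert B (earlier_hits R x B)"
  show "A \<in> {A \<in> \<A>. x A \<in> B}"
  proof (cases "A = B")
    case False
    then have "(A, B) \<in> R" "x A \<in> B" using A by (simp_all add: earlier_hits_def)
    then show ?thesis using R by (auto simp: strict_wellorder_on_def)
  qed (use B x in \<open>simp add: fresh_transversal_def\<close>)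
qed

lemma ex_fresh_transversal_avoiding_crowded:
  assumes K: "infinite K" and members: "\<And>A. A \<in> \<A> \<Longrightarrow> |A| =o |K|"
    and almost_disjoint: "\<And>A B. A \<in> \<A> \<Longrightarrow> B \<in> \<A> \<Longrightarrow> A \<noteq> B \<Longrightarrow> finite (A \<inter> B) \<and> card (A \<inter> B) < d"
    and R: "strict_wellorder_on \<A> R" and pred: "\<And>A. A \<in> \<A> \<Longrightarrow> |{B. (B, A) \<in> R}| <o |K|"
  shows "\<exists>x. fresh_transversal \<A> R x \<and> (\<forall>A\<in>\<A>. \<forall>B\<in>\<A> - {A}.
    (\<exists>F\<subseteq>B \<inter> x ` {C. (C, A) \<in> R}. finite F \<and> card F = d) \<longrightarrow> x A \<notin> B)"
proof -
  have wf: "wf R" and R_sub: "R \<subseteq> \<A> \<times> \<A>" using R by (auto simp: strict_wellorder_on_def)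
  define crowded where "crowded f A =
    {B \<in> \<A> - {A}. \<exists>F\<subseteq>B \<inter> f ` {C. (C, A) \<in> R}. finite F \<and> card F = d}" for f A
  define good where "good f A y \<longleftrightarrow>
    (A \<in> \<A> \<longrightarrow> y \<in> A \<and> (\<forall>B\<in>{B. (B, A) \<in> R} \<union> crowded f A. y \<notin> B))" for f A y
  have good_ex: "\<exists>y. good f A y" for f A
  proof (cases "A \<in> \<A>")
    case True
    have "|crowded f A| \<le>o |Fpow (f ` {C. (C, A) \<in> R})|"
    proof (rule card_of_almost_disjoint_ordLeq_Fpow)
      show "\<exists>F\<subseteq>B \<inter> f ` {C. (C, A) \<in> R}. finite F \<and> card F = d" if "B \<in> crowded f A" for B
        using that by (simp add: crowded_def)
      show "finite (B \<inter> B') \<and> card (B \<inter> B') < d" if "B \<in> crowded f A" "B' \<in> crowded f A" "B \<noteq> B'" for B B'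
        using that almost_disjoint by (simp add: crowded_def)
    qed
    moreover have "|f ` {C. (C, A) \<in> R}| <o |K|"
      using card_of_image pred[OF True] ordLeq_ordLess_trans by blast
    ultimately have "|crowded f A| <o |K|"
      using card_of_Fpow_ordLess_infinite[OF K] ordLeq_ordLess_trans by blast
    then have "|{B. (B, A) \<in> R} \<union> crowded f A| <o |K|"
      using card_of_Un_ordLess_infinite[OF K pred[OF True]] by blast
    moreover have "finite (A \<inter> B)" if "B \<in> {B. (B, A) \<in> R} \<union> crowded f A" for B
    proof -
      have "B \<in> \<A> \<and> B \<noteq> A" using that R_sub wf_not_refl[OF wf] by (auto simp: crowded_def)
      then show ?thesis using almost_disjoint[OF True] by blast
    qed
    ultimately obtain y where "y \<in> A" "\<forall>B\<in>{B. (B, A) \<in> R} \<union> crowded f A. y \<notin> B"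
      using ex_mem_avoiding_finite_traces[OF K members[OF True]] by blast
    then show ?thesis unfolding good_def by blast
  qed (simp add: good_def)
  have good_cong: "good f A y = good g A y" if "\<And>C. (C, A) \<in> R \<Longrightarrow> f C = g C" for f g A y
  proof -
    have "f ` {C. (C, A) \<in> R} = g ` {C. (C, A) \<in> R}" using that by (auto intro: image_cong)
    then show ?thesis by (simp add: good_def crowded_def)
  qed
  obtain x where x: "\<And>A. good x A (x A)" using wf_rec_choice[of R good, OF wf good_ex good_cong] by blast
  have "fresh_transversal \<A> R x"
    unfolding fresh_transversal_def
  proof (intro conjI ballI allI impI)
    show "x A \<in> A" if "A \<in> \<A>" for A using x[of A] that by (simp add: good_def)
    show "x A \<notin> B" if "(B, A) \<in> R" for A B
      using x[of A] that R_sub by (auto simp: good_def)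
  qed
  moreover have "x A \<notin> B" if "A \<in> \<A>" "B \<in> \<A> - {A}"
    "\<exists>F\<subseteq>B \<inter> x ` {C. (C, A) \<in> R}. finite F \<and> card F = d" for A B
    using x[of A] that by (simp add: good_def crowded_def)
  ultimately show ?thesis by blast
qed

lemma ex_subset_card_Suc: "\<not> (finite S \<and> card S \<le> d) \<Longrightarrow> \<exists>G\<subseteq>S. finite G \<and> card G = Suc d"
proof (cases "finite S")
  case True
  assume "\<not> (finite S \<and> card S \<le> d)"
  then have "Suc d \<le> card S" using True by simp
  then obtain G where "G \<subseteq> S" "card G = Suc d" "finite G" by (rule obtain_subset_with_card_n)
  then show ?thesis by blast
next
  case False
  then show ?thesis using infinite_arbitrarily_large[OF False, of "Suc d"] by blast
qed

lemma earlier_hits_card_le: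
  assumes R: "strict_wellorder_on \<A> R" and x: "fresh_transversal \<A> R x"
    and avoids_crowded: "\<And>A B. A \<in> \<A> \<Longrightarrow> B \<in> \<A> - {A} \<Longrightarrow>
      \<exists>F\<subseteq>B \<inter> x ` {C. (C, A) \<in> R}. finite F \<and> card F = d \<Longrightarrow> x A \<notin> B"
    and B: "B \<in> \<A>"
  shows "finite (earlier_hits R x B) \<and> card (earlier_hits R x B) \<le> d"
proof (rule ccontr)
  assume "\<not> ?thesis"
  then obtain G where G: "G \<subseteq> earlier_hits R x B" "finite G" "card G = Suc d"
    using ex_subset_card_Suc by blast
  have "R \<subseteq> \<A> \<times> \<A>" "wf R" using R by (simp_all add: strict_wellorder_on_def)
  then have GA: "G \<subseteq> \<A>" using G(1) by (auto simp: earlier_hits_def)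
  obtain m where m: "m \<in> G" "\<forall>A\<in>G - {m}. (A, m) \<in> R"
    using strict_wellorder_on_finite_has_max[OF R GA G(2)] G(3) by force
  txt \<open>The other \<open>d\<close> members of \<open>G\<close> precede \<open>m\<close> and put their representatives into \<open>B\<close>,
    so \<open>B\<close> was crowded when \<open>x m\<close> was chosen.\<close>
  have "x ` (G - {m}) \<subseteq> B \<inter> x ` {C. (C, m) \<in> R}" using m G(1) by (auto simp: earlier_hits_def)
  moreover have "card (x ` (G - {m})) = d"
    using G m inj_on_subset[OF inj_on_fresh_transversal[OF R x] GA] by (simp add: card_image inj_on_diff)
  ultimately have crowded: "\<exists>F\<subseteq>B \<inter> x ` {C. (C, m) \<in> R}. finite F \<and> card F = d"
    using G(2) by blast
  have "m \<in> \<A>" "(m, B) \<in> R" "x m \<in> B" using m G(1) GA by (auto simp: earlier_hits_def)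
  moreover have "B \<in> \<A> - {m}" using B \<open>(m, B) \<in> R\<close> wf_not_refl[OF \<open>wf R\<close>] by auto
  ultimately show False using avoids_crowded[OF _ _ crowded] by blast
qed

lemma wCF_colorable_of_fresh_transversal:
  assumes R: "strict_wellorder_on \<A> R" and x: "fresh_transversal \<A> R x"
    and sparse: "\<And>B. B \<in> \<A> \<Longrightarrow> finite (earlier_hits R x B) \<and> card (earlier_hits R x B) \<le> 2 * k + 1"
    and "1 \<le> k"
  shows "wCF_colorable \<A> (Suc k)"
proof -
  have wf: "wf R" using R by (simp add: strict_wellorder_on_def)
  define good where "good f B cb \<longleftrightarrow> (B \<in> \<A> \<longrightarrow> cb \<le> k \<and>
    (\<exists>\<zeta>\<le>k. card {A \<in> insert B (earlier_hits R x B). (f(B := cb)) A = \<zeta>} = 1))" for f B cb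
  have good_ex: "\<exists>cb. good f B cb" for f B
  proof (cases "B \<in> \<A>")
    case True
    moreover have "B \<notin> earlier_hits R x B" using wf_not_refl[OF wf] by (simp add: earlier_hits_def)
    ultimately show ?thesis
      using ex_color_unique_in_insert[of "earlier_hits R x B" k B f] sparse \<open>1 \<le> k\<close> by (simp add: good_def)
  qed (simp add: good_def)
  have good_cong: "good f B cb = good g B cb" if "\<And>A. (A, B) \<in> R \<Longrightarrow> f A = g A" for f g B cb
  proof -
    have "{A \<in> insert B (earlier_hits R x B). (f(B := cb)) A = \<zeta>} =
        {A \<in> insert B (earlier_hits R x B). (g(B := cb)) A = \<zeta>}" for \<zeta>
      using that by (auto simp: earlier_hits_def)
    then show ?thesis by (simp add: good_def)
  qed
  obtain c where c: "\<And>B. good c B (c B)" using wf_rec_choice[of R good, OF wf good_ex good_cong] by blast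
  show ?thesis
  proof (rule wCF_colorable_of_transversal[OF inj_on_fresh_transversal[OF R x]])
    show "x A \<in> A" if "A \<in> \<A>" for A using that x by (simp add: fresh_transversal_def)
    show "c A < Suc k" if "A \<in> \<A>" for A using c[of A] that by (simp add: good_def)
    show "\<exists>\<zeta><Suc k. card {A \<in> \<A>. x A \<in> B \<and> c A = \<zeta>} = 1" if B: "B \<in> \<A>" for B
    proof -
      obtain \<zeta> where "\<zeta> \<le> k" "card {A \<in> insert B (earlier_hits R x B). c A = \<zeta>} = 1"
        using c[of B] B by (auto simp: good_def)
      moreover have "{A \<in> \<A>. x A \<in> B \<and> c A = \<zeta>} = {A \<in> insert B (earlier_hits R x B). c A = \<zeta>}"
        using fresh_transversal_hits[OF R x B] by blast
      ultimately show ?thesis by (intro exI[of _ \<zeta>]) auto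
    qed
  qed
qed

lemma wCF_colorable_Suc_of_lkm_system:
  assumes "Card_order \<kappa>" and K: "infinite (Field \<kappa>)" and sys: "lkm_system \<A> \<kappa> \<kappa> d"
    and "d \<le> 2 * k + 1" and "1 \<le> k"
  shows "wCF_colorable \<A> (Suc k)"
proof -
  have \<kappa>: "\<kappa> =o |Field \<kappa>|" using card_of_Field_ordIso[OF \<open>Card_order \<kappa>\<close>] by (rule ordIso_symmetric)
  have "|\<A>| =o |Field \<kappa>|" using sys ordIso_transitive[OF _ \<kappa>] unfolding lkm_system_def by blast
  have members: "|A| =o |Field \<kappa>|" if "A \<in> \<A>" for A
    using sys that ordIso_transitive[OF _ \<kappa>] unfolding lkm_system_def by blast
  have almost_disjoint: "finite (A \<inter> B) \<and> card (A \<inter> B) < d" if "A \<in> \<A>" "B \<in> \<A>" "A \<noteq> B" for A B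
    using sys that by (simp add: lkm_system_def)
  obtain R where R: "strict_wellorder_on \<A> R" and pred: "\<And>A. A \<in> \<A> \<Longrightarrow> |{B. (B, A) \<in> R}| <o |Field \<kappa>|"
    using ex_strict_wellorder_small_predecessors[OF \<open>|\<A>| =o |Field \<kappa>|\<close>] by blast
  obtain x where x: "fresh_transversal \<A> R x" and avoids_crowded: "\<forall>A\<in>\<A>. \<forall>B\<in>\<A> - {A}.
      (\<exists>F\<subseteq>B \<inter> x ` {C. (C, A) \<in> R}. finite F \<and> card F = d) \<longrightarrow> x A \<notin> B"
    using ex_fresh_transversal_avoiding_crowded[OF K members almost_disjoint R pred] by blast
  have "finite (earlier_hits R x B) \<and> card (earlier_hits R x B) \<le> d" if "B \<in> \<A>" for B
    by (rule earlier_hits_card_le[OF R x _ that]) (use avoids_crowded in blast)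
  then have "finite (earlier_hits R x B) \<and> card (earlier_hits R x B) \<le> 2 * k + 1" if "B \<in> \<A>" for B
    using that \<open>d \<le> 2 * k + 1\<close> by fastforce
  then show ?thesis using wCF_colorable_of_fresh_transversal[OF R x] \<open>1 \<le> k\<close> by blast
qed

section \<open>The lower bound\<close>

lemma ex_enumeration_avoiding_small_sets:
  assumes I: "infinite I" and X: "|X| \<le>o |I|" and "X \<noteq> {}"
  shows "\<exists>e. (\<forall>\<alpha>. e \<alpha> \<in> X) \<and> (\<forall>T\<in>X. \<forall>L. |L| <o |I| \<longrightarrow> (\<exists>\<alpha>\<in>I. \<alpha> \<notin> L \<and> e \<alpha> = T))"
proof -
  have "|I \<times> X| \<le>o |I|"
    using card_of_Times_ordLeq_infinite_Field[of "|I|" I X] X I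
      ordLeq_refl[OF card_of_Card_order[of I]] card_of_Card_order[of I] by (simp add: Field_card_of)
  then obtain h where h: "inj_on h (I \<times> X)" "h ` (I \<times> X) \<subseteq> I"
    using card_of_ordLeq[THEN iffD2] by blast
  obtain T0 where "T0 \<in> X" using \<open>X \<noteq> {}\<close> by blast
  define e where "e \<alpha> = (if \<alpha> \<in> h ` (I \<times> X) then snd (inv_into (I \<times> X) h \<alpha>) else T0)" for \<alpha>
  have "e \<alpha> \<in> X" for \<alpha>
    using inv_into_into[of \<alpha> h "I \<times> X"] \<open>T0 \<in> X\<close> by (auto simp: e_def)
  moreover have "\<exists>\<alpha>\<in>I. \<alpha> \<notin> L \<and> e \<alpha> = T" if T: "T \<in> X" and L: "|L| <o |I|" for T L
  proof -
    have "inj_on (\<lambda>\<beta>. h (\<beta>, T)) I" using T by (intro inj_onI) (auto dest: inj_onD[OF h(1)])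
    then have "bij_betw (\<lambda>\<beta>. h (\<beta>, T)) I ((\<lambda>\<beta>. h (\<beta>, T)) ` I)" by (rule inj_on_imp_bij_betw)
    then have "|(\<lambda>\<beta>. h (\<beta>, T)) ` I| =o |I|"
      using card_of_ordIso[THEN iffD1] ordIso_symmetric by blast
    then obtain \<beta> where \<beta>: "\<beta> \<in> I" "h (\<beta>, T) \<notin> L" using ex_mem_not_in_smaller[OF _ L] by blast
    have "(\<beta>, T) \<in> I \<times> X" using \<beta>(1) T by simp
    then have "e (h (\<beta>, T)) = T" by (simp add: e_def inv_into_f_f[OF h(1)])
    moreover have "h (\<beta>, T) \<in> I" using \<beta>(1) T h(2) by auto
    ultimately show ?thesis using \<beta>(2) by blast
  qed
  ultimately show ?thesis by blast
qed

lemma finite_if_no_two_subset: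
  assumes "\<not> (\<exists>D\<subseteq>S. card D = 2)"
  shows "finite S"
proof (rule ccontr)
  assume "infinite S"
  then obtain D where "finite D \<and> card D = 2 \<and> D \<subseteq> S" using infinite_arbitrarily_large by blast
  then show False using assms by blast
qed

text \<open>\<open>T\<close> takes two points from every class with at least two points and \<open>P\<close> is the union of
  the remaining classes, so a set containing \<open>T\<close> and missing \<open>P\<close> meets no class in exactly one point.\<close>

lemma trap_for_classes:
  assumes C_disjoint: "\<And>i j. i \<noteq> j \<Longrightarrow> C i \<inter> C j = {}"
  obtains T P where "T \<subseteq> (\<Union>i<k. C i)" "finite T" "P \<subseteq> (\<Union>i<k. C i)" "finite P" "T \<inter> P = {}"
    "card T \<le> 2 * k" "card T = 2 * k \<Longrightarrow> P = {}"
    "\<And>B i. T \<subseteq> B \<Longrightarrow> B \<inter> P = {} \<Longrightarrow> i < k \<Longrightarrow> card (B \<inter> C i) \<noteq> 1"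
proof -
  define Big where "Big = {i. i < k \<and> (\<exists>D\<subseteq>C i. card D = 2)}"
  have "\<forall>i\<in>Big. \<exists>D. D \<subseteq> C i \<and> card D = 2" by (simp add: Big_def)
  then have "\<exists>D. \<forall>i\<in>Big. D i \<subseteq> C i \<and> card (D i) = 2" by (rule bchoice)
  then obtain D where "\<forall>i\<in>Big. D i \<subseteq> C i \<and> card (D i) = 2" by blast
  then have D_sub: "\<And>i. i \<in> Big \<Longrightarrow> D i \<subseteq> C i" and D_card: "\<And>i. i \<in> Big \<Longrightarrow> card (D i) = 2"
    by blast+
  have D_fin: "finite (D i)" if "i \<in> Big" for i using D_card[OF that] by (simp add: card_ge_0_finite)
  define T where "T = (\<Union>i\<in>Big. D i)"
  define P where "P = (\<Union>i\<in>{..<k} - Big. C i)"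
  have "finite Big" by (simp add: Big_def)
  have "card T = (\<Sum>i\<in>Big. card (D i))" unfolding T_def
    using \<open>finite Big\<close> D_fin D_sub C_disjoint by (intro card_UN_disjoint) blast+
  then have card_T: "card T = 2 * card Big" using D_card by simp
  have "card Big \<le> k" using card_mono[of "{..<k}" Big] by (auto simp: Big_def)
  show thesis
  proof (rule that)
    show "T \<subseteq> (\<Union>i<k. C i)" unfolding T_def by (rule UN_mono[OF _ D_sub]) (auto simp: Big_def)
    show "finite T" using \<open>finite Big\<close> D_fin by (simp add: T_def)
    show "P \<subseteq> (\<Union>i<k. C i)" by (auto simp: P_def)
    show "finite P" unfolding P_def
    proof (rule finite_UN_I)
      show "finite (C i)" if "i \<in> {..<k} - Big" for i
        using that by (intro finite_if_no_two_subset) (auto simp: Big_def)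
    qed simp
    have "D i \<inter> C j = {}" if "i \<in> Big" "j \<notin> Big" for i j
      using D_sub[OF that(1)] C_disjoint[of i j] that by blast
    then show "T \<inter> P = {}" unfolding T_def P_def by blast
    show "card T \<le> 2 * k" using card_T \<open>card Big \<le> k\<close> by simp
    show "P = {}" if "card T = 2 * k"
    proof -
      have "Big \<subseteq> {..<k}" "card Big = card {..<k}" using that card_T by (auto simp: Big_def)
      then have "Big = {..<k}" by (intro card_subset_eq) simp_all
      then show ?thesis by (simp add: P_def)
    qed
    show "card (B \<inter> C i) \<noteq> 1" if "T \<subseteq> B" "B \<inter> P = {}" "i < k" for B i
    proof (cases "i \<in> Big")
      case True
      then have "D i \<subseteq> B \<inter> C i" using D_sub that(1) by (auto simp: T_def)
      show ?thesis
      proof (cases "finite (B \<inter> C i)")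
        case True
        then show ?thesis using card_mono[OF True \<open>D i \<subseteq> B \<inter> C i\<close>] D_card[OF \<open>i \<in> Big\<close>] by simp
      qed simp
    next
      case False
      then have "B \<inter> C i = {}" using that(2,3) by (auto simp: P_def)
      then show ?thesis by simp
    qed
  qed
qed

lemma not_wCF_colorable_if_separating:
  assumes separating: "\<And>T P. T \<subseteq> \<Union>\<A> \<Longrightarrow> P \<subseteq> \<Union>\<A> \<Longrightarrow> finite T \<Longrightarrow> finite P \<Longrightarrow> T \<inter> P = {} \<Longrightarrow>
      card T \<le> 2 * k \<Longrightarrow> (card T = 2 * k \<Longrightarrow> P = {}) \<Longrightarrow> \<exists>B\<in>\<A>. T \<subseteq> B \<and> B \<inter> P = {}"
  shows "\<not> wCF_colorable \<A> k"
proof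
  assume "wCF_colorable \<A> k"
  then obtain f where dom: "dom f \<subseteq> \<Union>\<A>"
    and unique: "\<And>B. B \<in> \<A> \<Longrightarrow> \<exists>\<zeta><k. card (B \<inter> {y. f y = Some \<zeta>}) = 1"
    unfolding wCF_colorable_def wCF_coloring_def by blast
  define C where "C i = {y. f y = Some i}" for i
  have C_disjoint: "C i \<inter> C j = {}" if "i \<noteq> j" for i j using that by (auto simp: C_def)
  have "(\<Union>i<k. C i) \<subseteq> \<Union>\<A>" using dom by (auto simp: C_def)
  show False
  proof (rule trap_for_classes[of C k, OF C_disjoint])
    fix T P
    assume T: "T \<subseteq> (\<Union>i<k. C i)" "finite T" and P: "P \<subseteq> (\<Union>i<k. C i)" "finite P"
      and "T \<inter> P = {}" "card T \<le> 2 * k" and full: "card T = 2 * k \<Longrightarrow> P = {}"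
      and trap: "\<And>B i. T \<subseteq> B \<Longrightarrow> B \<inter> P = {} \<Longrightarrow> i < k \<Longrightarrow> card (B \<inter> C i) \<noteq> 1"
    obtain B where B: "B \<in> \<A>" "T \<subseteq> B" "B \<inter> P = {}"
      using separating[OF subset_trans[OF T(1)] subset_trans[OF P(1)] T(2) P(2) \<open>T \<inter> P = {}\<close>
          \<open>card T \<le> 2 * k\<close> full] \<open>(\<Union>i<k. C i) \<subseteq> \<Union>\<A>\<close> by blast
    obtain \<zeta> where "\<zeta> < k" "card (B \<inter> C \<zeta>) = 1" using unique[OF B(1)] by (auto simp: C_def)
    then show False using trap[OF B(2,3)] by blast
  qed
qed

text \<open>\<open>U\<close> is a solution of the recursion \<open>U_eq\<close> for the finite parts of the members, in which
  \<open>U \<gamma> \<union> {\<gamma>} \<times> above \<kappa> \<gamma>\<close> is the member \<open>block \<gamma>\<close> defined below; the recursion is solved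
  in \<open>ex_lkm_system_not_wCF_colorable\<close>.\<close>

locale tail_blocks =
  fixes \<kappa> :: "'k rel" and k :: nat and e :: "'k \<Rightarrow> ('k \<times> 'k) set" and U :: "'k \<Rightarrow> ('k \<times> 'k) set"
  assumes card_order: "Card_order \<kappa>" and infinite_Field: "infinite (Field \<kappa>)" and k_pos: "1 \<le> k"
    and e_Fpow: "\<And>\<alpha>. e \<alpha> \<in> Fpow (Field \<kappa> \<times> Field \<kappa>)"
    and e_cofinal: "\<And>T L. T \<in> Fpow (Field \<kappa> \<times> Field \<kappa>) \<Longrightarrow> |L| <o |Field \<kappa>| \<Longrightarrow>
      \<exists>\<alpha>\<in>Field \<kappa>. \<alpha> \<notin> L \<and> e \<alpha> = T"
    and U_eq: "\<And>\<alpha>. U \<alpha> = (if snd ` e \<alpha> \<subseteq> underS \<kappa> \<alpha> \<and>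
        (card (e \<alpha>) < 2 * k \<or> card (e \<alpha>) = 2 * k \<and> (\<forall>\<gamma>\<in>underS \<kappa> \<alpha>. \<not> e \<alpha> \<subseteq> U \<gamma> \<union> {\<gamma>} \<times> above \<kappa> \<gamma>))
      then e \<alpha> else {})"
begin

definition block :: "'k \<Rightarrow> ('k \<times> 'k) set" where
  "block \<alpha> = U \<alpha> \<union> {\<alpha>} \<times> above \<kappa> \<alpha>"

lemma well_order: "Well_order \<kappa>"
  using card_order by (rule card_order_on_well_order_on)

lemma in_underS_trans: "\<beta> \<in> underS \<kappa> \<gamma> \<Longrightarrow> \<gamma> \<in> underS \<kappa> \<alpha> \<Longrightarrow> \<beta> \<in> underS \<kappa> \<alpha>"
  using well_order
  by (auto simp: underS_def well_order_on_def linear_order_on_def partial_order_on_def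
      preorder_on_def antisym_def dest: transD)

lemma in_underS_not_above: "\<beta> \<in> underS \<kappa> \<alpha> \<Longrightarrow> \<beta> \<notin> above \<kappa> \<alpha>"
  using well_order
  by (auto simp: underS_def above_def well_order_on_def linear_order_on_def partial_order_on_def antisym_def)

lemma in_underS_cases:
  assumes "\<alpha> \<in> Field \<kappa>" "\<gamma> \<in> Field \<kappa>" "\<alpha> \<noteq> \<gamma>"
  shows "\<gamma> \<in> underS \<kappa> \<alpha> \<or> \<alpha> \<in> underS \<kappa> \<gamma>"
  using well_order assms by (auto simp: underS_def well_order_on_def linear_order_on_def total_on_def)

lemma Field_subset_above_underS:
  assumes "\<alpha> \<in> Field \<kappa>"
  shows "Field \<kappa> \<subseteq> above \<kappa> \<alpha> \<union> underS \<kappa> \<alpha>"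
proof
  fix \<beta> assume \<beta>: "\<beta> \<in> Field \<kappa>"
  have "(\<alpha>, \<alpha>) \<in> \<kappa>"
    using well_order assms by (auto simp: well_order_on_def linear_order_on_def partial_order_on_def
      preorder_on_def refl_on_def)
  then show "\<beta> \<in> above \<kappa> \<alpha> \<union> underS \<kappa> \<alpha>"
    using in_underS_cases[OF assms \<beta>] by (cases "\<alpha> = \<beta>") (auto simp: above_def underS_def)
qed

lemma U_cases:
  "U \<alpha> = {} \<or> U \<alpha> = e \<alpha> \<and> snd ` e \<alpha> \<subseteq> underS \<kappa> \<alpha> \<and>
     (card (e \<alpha>) < 2 * k \<or> card (e \<alpha>) = 2 * k \<and> (\<forall>\<gamma>\<in>underS \<kappa> \<alpha>. \<not> e \<alpha> \<subseteq> block \<gamma>))"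
  using U_eq[of \<alpha>] by (auto simp: block_def split: if_splits)

lemma finite_U: "finite (U \<alpha>)"
  using U_cases[of \<alpha>] e_Fpow[of \<alpha>] by (auto simp: Fpow_def)

lemma U_below: "q \<in> U \<alpha> \<Longrightarrow> snd q \<in> underS \<kappa> \<alpha>"
  using U_cases[of \<alpha>] by auto

lemma U_subset: "U \<alpha> \<subseteq> Field \<kappa> \<times> Field \<kappa>"
  using U_cases[of \<alpha>] e_Fpow[of \<alpha>] by (auto simp: Fpow_def)

lemma block_subset: "block \<alpha> \<subseteq> Field \<kappa> \<times> Field \<kappa>"
  using U_subset[of \<alpha>] by (auto simp: block_def above_def intro: FieldI1 FieldI2)

lemma card_of_underS_ordLess: "\<alpha> \<in> Field \<kappa> \<Longrightarrow> |underS \<kappa> \<alpha>| <o |Field \<kappa>|"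
  using card_of_underS[OF card_order] card_of_Field_ordIso[OF card_order]
  by (blast intro: ordLess_ordIso_trans ordIso_symmetric)

lemma in_underS_if_not_under:
  assumes "\<alpha> \<in> Field \<kappa>" "\<beta> \<in> Field \<kappa>" "\<alpha> \<notin> under \<kappa> \<beta>"
  shows "\<beta> \<in> underS \<kappa> \<alpha>"
  using Field_subset_above_underS[OF assms(1)] assms(2,3) by (auto simp: above_def under_def)

lemma block_Int_earlier:
  assumes "\<gamma> \<in> underS \<kappa> \<alpha>"
  shows "block \<alpha> \<inter> block \<gamma> = U \<alpha> \<inter> block \<gamma>"
proof -
  have "p \<notin> block \<gamma>" if p: "p \<in> {\<alpha>} \<times> above \<kappa> \<alpha>" for p
  proof
    assume "p \<in> block \<gamma>"
    moreover have "p \<notin> {\<gamma>} \<times> above \<kappa> \<gamma>" using p assms by (auto simp: underS_def)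
    ultimately have "snd p \<in> underS \<kappa> \<gamma>" using U_below by (auto simp: block_def)
    then have "snd p \<in> underS \<kappa> \<alpha>" using assms by (rule in_underS_trans)
    then show False using p in_underS_not_above by auto
  qed
  then show ?thesis by (auto simp: block_def)
qed

lemma block_Int_earlier_card_less:
  assumes "\<gamma> \<in> underS \<kappa> \<alpha>"
  shows "finite (block \<alpha> \<inter> block \<gamma>) \<and> card (block \<alpha> \<inter> block \<gamma>) < 2 * k"
proof -
  have "card (U \<alpha> \<inter> block \<gamma>) < 2 * k"
  proof (cases "U \<alpha> = {}")
    case True
    then show ?thesis using k_pos by simp
  next
    case False
    then have U: "U \<alpha> = e \<alpha>" "card (e \<alpha>) < 2 * k \<or> card (e \<alpha>) = 2 * k \<and> \<not> e \<alpha> \<subseteq> block \<gamma>"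
      using U_cases[of \<alpha>] assms by auto
    show ?thesis
    proof (cases "card (e \<alpha>) < 2 * k")
      case True
      then show ?thesis using card_mono[OF finite_U, of "U \<alpha> \<inter> block \<gamma>" \<alpha>] U(1) by simp
    next
      case False
      then have "U \<alpha> \<inter> block \<gamma> \<subset> U \<alpha>" "card (U \<alpha>) = 2 * k" using U by auto
      then show ?thesis using psubset_card_mono[OF finite_U] by metis
    qed
  qed
  then show ?thesis using finite_U block_Int_earlier[OF assms] by simp
qed

lemma block_Int_card_less:
  assumes "\<alpha> \<in> Field \<kappa>" "\<gamma> \<in> Field \<kappa>" "\<alpha> \<noteq> \<gamma>"
  shows "finite (block \<alpha> \<inter> block \<gamma>) \<and> card (block \<alpha> \<inter> block \<gamma>) < 2 * k"
  using in_underS_cases[OF assms] block_Int_earlier_card_less[of \<gamma> \<alpha>] block_Int_earlier_card_less[of \<alpha> \<gamma>]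
  by (auto simp: Int_commute)

lemma card_of_block:
  assumes "\<alpha> \<in> Field \<kappa>"
  shows "|block \<alpha>| =o |Field \<kappa>|"
proof -
  have "\<not> |above \<kappa> \<alpha>| <o |Field \<kappa>|"
  proof
    assume "|above \<kappa> \<alpha>| <o |Field \<kappa>|"
    then have "|above \<kappa> \<alpha> \<union> underS \<kappa> \<alpha>| <o |Field \<kappa>|"
      using card_of_Un_ordLess_infinite[OF infinite_Field _ card_of_underS_ordLess[OF assms]] by blast
    moreover have "|Field \<kappa>| \<le>o |above \<kappa> \<alpha> \<union> underS \<kappa> \<alpha>|"
      using Field_subset_above_underS[OF assms] by (rule card_of_mono1)
    ultimately show False using not_ordLess_ordLeq by blast
  qed
  then have "|Field \<kappa>| \<le>o |above \<kappa> \<alpha>|"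
    by (simp add: not_ordLess_iff_ordLeq[OF card_of_Well_order card_of_Well_order])
  also have "|above \<kappa> \<alpha>| \<le>o |block \<alpha>|"
  proof -
    have "inj_on (Pair \<alpha>) (above \<kappa> \<alpha>)" "Pair \<alpha> ` above \<kappa> \<alpha> \<subseteq> block \<alpha>"
      by (auto simp: block_def inj_on_def)
    then show ?thesis using card_of_ordLeq by blast
  qed
  finally have "|Field \<kappa>| \<le>o |block \<alpha>|" .
  moreover have "|block \<alpha>| \<le>o |Field \<kappa>|"
    using card_of_mono1[OF block_subset] card_of_Times_same_infinite[OF infinite_Field]
    by (rule ordLeq_ordIso_trans)
  ultimately show ?thesis by (simp add: ordIso_iff_ordLeq)
qed

lemma inj_on_block: "inj_on block (Field \<kappa>)"
proof (rule inj_onI, rule ccontr)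
  fix \<alpha> \<gamma> assume "\<alpha> \<in> Field \<kappa>" "\<gamma> \<in> Field \<kappa>" "block \<alpha> = block \<gamma>" "\<alpha> \<noteq> \<gamma>"
  then have "finite (block \<alpha>)" using block_Int_card_less by force
  then show False using card_of_block[OF \<open>\<alpha> \<in> Field \<kappa>\<close>] infinite_Field card_of_ordIso_finite by blast
qed


lemma blocks_separating:
  assumes T: "T \<subseteq> Field \<kappa> \<times> Field \<kappa>" "finite T" and P: "P \<subseteq> Field \<kappa> \<times> Field \<kappa>" "finite P"
    and "T \<inter> P = {}" and "card T \<le> 2 * k" and full: "card T = 2 * k \<Longrightarrow> P = {}"
  shows "\<exists>B\<in>block ` Field \<kappa>. T \<subseteq> B \<and> B \<inter> P = {}"
proof -
  define L where "L = (\<Union>q\<in>T \<union> P. under \<kappa> (snd q))"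
  have "|under \<kappa> \<beta>| <o |Field \<kappa>|" if "\<beta> \<in> Field \<kappa>" for \<beta>
  proof -
    have "under \<kappa> \<beta> \<subseteq> underS \<kappa> \<beta> \<union> {\<beta>}" by (auto simp: under_def underS_def)
    moreover have "|underS \<kappa> \<beta> \<union> {\<beta>}| <o |Field \<kappa>|"
      using card_of_Un_ordLess_infinite[OF infinite_Field card_of_underS_ordLess[OF that]
          finite_card_of_ordLess_infinite[of "{\<beta>}", OF _ infinite_Field]] by simp
    ultimately show ?thesis using card_of_mono1 ordLeq_ordLess_trans by blast
  qed
  then have "|L| <o |Field \<kappa>|"
    unfolding L_def using T P by (intro card_of_finite_UN_ordLess[OF infinite_Field]) auto
  moreover have "T \<in> Fpow (Field \<kappa> \<times> Field \<kappa>)" using T by (simp add: Fpow_def)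
  ultimately obtain \<alpha> where \<alpha>: "\<alpha> \<in> Field \<kappa>" "\<alpha> \<notin> L" "e \<alpha> = T" using e_cofinal by blast
  have below: "snd q \<in> underS \<kappa> \<alpha>" if "q \<in> T \<union> P" for q
    using \<alpha> that T P by (intro in_underS_if_not_under) (auto simp: L_def)
  show ?thesis
  proof (cases "T \<subseteq> block \<alpha> \<and> block \<alpha> \<inter> P = {}")
    case True
    then show ?thesis using \<alpha>(1) by blast
  next
    case False
    have "block \<alpha> \<inter> P \<subseteq> U \<alpha>" using below in_underS_not_above by (fastforce simp: block_def)
    then have "U \<alpha> \<noteq> T" using False \<open>T \<inter> P = {}\<close> by (auto simp: block_def)
    then have "card T = 2 * k" and "\<exists>\<gamma>\<in>underS \<kappa> \<alpha>. T \<subseteq> block \<gamma>"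
      using U_eq[of \<alpha>] \<alpha>(3) below \<open>card T \<le> 2 * k\<close> by (auto simp: block_def split: if_splits)
    then obtain \<gamma> where "\<gamma> \<in> underS \<kappa> \<alpha>" "T \<subseteq> block \<gamma>" by blast
    moreover have "\<gamma> \<in> Field \<kappa>" using \<open>\<gamma> \<in> underS \<kappa> \<alpha>\<close> by (auto simp: underS_def intro: FieldI1)
    ultimately show ?thesis using full \<open>card T = 2 * k\<close> by blast
  qed
qed


lemma lkm_system_blocks: "lkm_system (block ` Field \<kappa>) \<kappa> \<kappa> (2 * k)"
  unfolding lkm_system_def
proof (intro conjI ballI impI)
  have "|Field \<kappa>| =o |block ` Field \<kappa>|"
    using inj_on_block by (intro card_of_ordIso[THEN iffD1] exI[of _ block]) (simp add: inj_on_imp_bij_betw)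
  then show "|block ` Field \<kappa>| =o \<kappa>"
    using card_of_Field_ordIso[OF card_order] ordIso_symmetric ordIso_transitive by blast
  show "|A| =o \<kappa>" if "A \<in> block ` Field \<kappa>" for A
    using that card_of_block card_of_Field_ordIso[OF card_order] ordIso_transitive by blast
  show "finite (A \<inter> B)" "card (A \<inter> B) < 2 * k"
    if "A \<in> block ` Field \<kappa>" "B \<in> block ` Field \<kappa>" "A \<noteq> B" for A B
    using that block_Int_card_less by auto
qed

lemma Union_blocks_subset: "\<Union>(block ` Field \<kappa>) \<subseteq> Field \<kappa> \<times> Field \<kappa>"
  using block_subset by blast

lemma not_wCF_colorable_blocks: "\<not> wCF_colorable (block ` Field \<kappa>) k"
proof (rule not_wCF_colorable_if_separating)
  show "\<exists>B\<in>block ` Field \<kappa>. T \<subseteq> B \<and> B \<inter> P = {}"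
    if "T \<subseteq> \<Union>(block ` Field \<kappa>)" "P \<subseteq> \<Union>(block ` Field \<kappa>)" "finite T" "finite P" "T \<inter> P = {}"
      "card T \<le> 2 * k" "card T = 2 * k \<Longrightarrow> P = {}" for T P
    using that(1,2) Union_blocks_subset by (intro blocks_separating[OF _ that(3) _ that(4-7)]) auto
qed

end

lemma ex_lkm_system_not_wCF_colorable:
  assumes "Card_order \<kappa>" and "infinite (Field \<kappa>)" and "1 \<le> k"
  shows "\<exists>\<A>. \<Union>\<A> \<subseteq> Field \<kappa> \<times> Field \<kappa> \<and> lkm_system \<A> \<kappa> \<kappa> (2 * k) \<and> \<not> wCF_colorable \<A> k"
proof -
  have infinite_square: "infinite (Field \<kappa> \<times> Field \<kappa>)"
    using assms(2) by (simp add: finite_cartesian_product_iff infinite_imp_nonempty)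
  have "|Fpow (Field \<kappa> \<times> Field \<kappa>)| \<le>o |Field \<kappa>|"
    using card_of_Fpow_ordLeq_infinite[OF infinite_square] card_of_Times_same_infinite[OF assms(2)]
    by (rule ordLeq_ordIso_trans)
  then obtain e where e_Fpow: "\<forall>\<alpha>. e \<alpha> \<in> Fpow (Field \<kappa> \<times> Field \<kappa>)"
    and e_cofinal: "\<forall>T\<in>Fpow (Field \<kappa> \<times> Field \<kappa>). \<forall>L. |L| <o |Field \<kappa>| \<longrightarrow>
      (\<exists>\<alpha>\<in>Field \<kappa>. \<alpha> \<notin> L \<and> e \<alpha> = T)"
    using ex_enumeration_avoiding_small_sets[OF assms(2) _ Fpow_not_empty] by blast
  define step where "step f \<alpha> = (if snd ` e \<alpha> \<subseteq> underS \<kappa> \<alpha> \<and>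
      (card (e \<alpha>) < 2 * k \<or> card (e \<alpha>) = 2 * k \<and> (\<forall>\<gamma>\<in>underS \<kappa> \<alpha>. \<not> e \<alpha> \<subseteq> f \<gamma> \<union> {\<gamma>} \<times> above \<kappa> \<gamma>))
    then e \<alpha> else {})" for f \<alpha>
  have wf: "wf (\<kappa> - Id)"
    using card_order_on_well_order_on[OF assms(1)] by (simp add: well_order_on_def)
  have step_cong: "(y = step f \<alpha>) = (y = step g \<alpha>)"
    if "\<And>\<gamma>. (\<gamma>, \<alpha>) \<in> \<kappa> - Id \<Longrightarrow> f \<gamma> = g \<gamma>" for f g \<alpha> y
    using that by (auto simp: step_def underS_def)
  obtain U where U: "\<forall>\<alpha>. U \<alpha> = step U \<alpha>"
    using wf_rec_choice[of "\<kappa> - Id" "\<lambda>f \<alpha> y. y = step f \<alpha>", OF wf _ step_cong] by blast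
  interpret tail_blocks \<kappa> k e U
    using assms e_Fpow e_cofinal U[unfolded step_def] by unfold_locales blast+
  show ?thesis
    using Union_blocks_subset lkm_system_blocks not_wCF_colorable_blocks by blast
qed

section \<open>Transfer to an arbitrary ground type\<close>

lemma wCF_colorable_mono: "wCF_colorable \<A> n \<Longrightarrow> n \<le> m \<Longrightarrow> wCF_colorable \<A> m"
  unfolding wCF_colorable_def wCF_coloring_def by (meson order.trans lessThan_subset_iff order_less_le_trans)

lemma wCF_colorable_of_image:
  assumes inj: "inj_on h (\<Union>\<A>)" and "wCF_colorable ((`) h ` \<A>) n"
  shows "wCF_colorable \<A> n"
proof -
  obtain f where f: "ran f \<subseteq> {..<n}"
    "\<forall>B\<in>(`) h ` \<A>. \<exists>\<zeta><n. card (B \<inter> {x. f x = Some \<zeta>}) = 1"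
    using assms(2) unfolding wCF_colorable_def wCF_coloring_def by blast
  define g where "g y = (if y \<in> \<Union>\<A> then f (h y) else None)" for y
  have "wCF_coloring \<A> n g"
    unfolding wCF_coloring_def
  proof (intro conjI ballI)
    show "dom g \<subseteq> \<Union>\<A>" by (auto simp: g_def dom_def split: if_splits)
    have "ran g \<subseteq> ran f" by (auto simp: g_def ran_def split: if_splits)
    then show "ran g \<subseteq> {..<n}" using f(1) by blast
  next
    fix A assume A: "A \<in> \<A>"
    obtain \<zeta> where \<zeta>: "\<zeta> < n" "card (h ` A \<inter> {x. f x = Some \<zeta>}) = 1" using f(2) A by blast
    have "h ` (A \<inter> {y. g y = Some \<zeta>}) = h ` A \<inter> {x. f x = Some \<zeta>}"
      using A by (auto simp: g_def)
    moreover have "inj_on h (A \<inter> {y. g y = Some \<zeta>})" using inj A by (auto intro: inj_on_subset)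
    ultimately have "card (A \<inter> {y. g y = Some \<zeta>}) = 1" using \<zeta>(2) by (metis card_image)
    then show "\<exists>\<zeta><n. card (A \<inter> {y. g y = Some \<zeta>}) = 1" using \<zeta>(1) by blast
  qed
  then show ?thesis unfolding wCF_colorable_def by blast
qed

lemma lkm_system_image:
  assumes inj: "inj_on h (\<Union>\<A>)" and sys: "lkm_system \<A> lam \<kappa> \<mu>"
  shows "lkm_system ((`) h ` \<A>) lam \<kappa> \<mu>"
  unfolding lkm_system_def
proof (intro conjI ballI impI)
  have "inj_on ((`) h) \<A>"
    using inj by (intro inj_onI) (metis Sup_upper inj_on_image_eq_iff)
  then have "|\<A>| =o |(`) h ` \<A>|" by (intro card_of_ordIso[THEN iffD1] exI) (rule inj_on_imp_bij_betw)
  moreover have "|\<A>| =o lam" using sys by (simp add: lkm_system_def)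
  ultimately show "|(`) h ` \<A>| =o lam" using ordIso_symmetric ordIso_transitive by metis
next
  fix B assume "B \<in> (`) h ` \<A>"
  then obtain A where A: "A \<in> \<A>" "B = h ` A" by blast
  then have "inj_on h A" using inj by (auto intro: inj_on_subset)
  then have "|A| =o |B|" using A(2) by (intro card_of_ordIso[THEN iffD1] exI[of _ h]) (simp add: inj_on_imp_bij_betw)
  moreover have "|A| =o \<kappa>" using sys A(1) by (simp add: lkm_system_def)
  ultimately show "|B| =o \<kappa>" using ordIso_symmetric ordIso_transitive by metis
next
  fix B B' assume "B \<in> (`) h ` \<A>" "B' \<in> (`) h ` \<A>" "B \<noteq> B'"
  then obtain A A' where A: "A \<in> \<A>" "B = h ` A" "A' \<in> \<A>" "B' = h ` A'" "A \<noteq> A'" by blast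
  have "B \<inter> B' = h ` (A \<inter> A')" using A inj_on_image_Int[OF inj, of A A'] by auto
  moreover have "finite (A \<inter> A')" "card (A \<inter> A') < \<mu>" using sys A(1,3,5) by (simp_all add: lkm_system_def)
  ultimately show "finite (B \<inter> B')" "card (B \<inter> B') < \<mu>" using card_image_le[of "A \<inter> A'" h] by auto
qed

lemma lkm_system_mono: "lkm_system \<A> lam \<kappa> \<mu> \<Longrightarrow> \<mu> \<le> \<mu>' \<Longrightarrow> lkm_system \<A> lam \<kappa> \<mu>'"
  unfolding lkm_system_def by (meson order_less_le_trans)

lemma wchi_CF_le: "wCF_colorable \<A> n \<Longrightarrow> wchi_CF \<A> \<le> enat n"
  unfolding wchi_CF_def by (auto intro: Least_le)

lemma wchi_CF_eq:
  assumes "wCF_colorable \<A> n" and "\<And>m. m < n \<Longrightarrow> \<not> wCF_colorable \<A> m"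
  shows "wchi_CF \<A> = enat n"
proof -
  have "(LEAST m. wCF_colorable \<A> m) = n"
    using assms by (intro Least_equality) (auto simp: not_less[symmetric])
  then show ?thesis using assms(1) unfolding wchi_CF_def by auto
qed

lemma ex_lkm_system_wchi_CF_eq:
  fixes \<kappa> :: "'k rel"
  assumes "Card_order \<kappa>" and "infinite (Field \<kappa>)" and "|Field \<kappa>| \<le>o |UNIV :: 'a set|"
    and "1 \<le> k" and "2 * k \<le> d" and "d \<le> 2 * k + 1"
  shows "\<exists>\<A> :: 'a set set. lkm_system \<A> \<kappa> \<kappa> d \<and> wchi_CF \<A> = enat (Suc k)"
proof -
  obtain \<A>\<^sub>0 where \<A>\<^sub>0: "\<Union>\<A>\<^sub>0 \<subseteq> Field \<kappa> \<times> Field \<kappa>" "lkm_system \<A>\<^sub>0 \<kappa> \<kappa> (2 * k)" "\<not> wCF_colorable \<A>\<^sub>0 k"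
    using ex_lkm_system_not_wCF_colorable[OF assms(1,2,4)] by blast
  have "|Field \<kappa> \<times> Field \<kappa>| \<le>o |UNIV :: 'a set|"
    using card_of_Times_same_infinite[OF assms(2)] assms(3) by (rule ordIso_ordLeq_trans)
  then obtain h :: "'k \<times> 'k \<Rightarrow> 'a" where "inj_on h (Field \<kappa> \<times> Field \<kappa>)"
    using card_of_ordLeq[THEN iffD2] by blast
  then have h: "inj_on h (\<Union>\<A>\<^sub>0)" using \<A>\<^sub>0(1) by (rule inj_on_subset)
  have sys: "lkm_system ((`) h ` \<A>\<^sub>0) \<kappa> \<kappa> d"
    using lkm_system_image[OF h \<A>\<^sub>0(2)] \<open>2 * k \<le> d\<close> by (rule lkm_system_mono)
  moreover have "wchi_CF ((`) h ` \<A>\<^sub>0) = enat (Suc k)"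
  proof (rule wchi_CF_eq)
    show "wCF_colorable ((`) h ` \<A>\<^sub>0) (Suc k)"
      using wCF_colorable_Suc_of_lkm_system[OF assms(1,2) sys assms(6,4)] .
    show "\<not> wCF_colorable ((`) h ` \<A>\<^sub>0) m" if "m < Suc k" for m
      using that \<A>\<^sub>0(3) wCF_colorable_mono wCF_colorable_of_image[OF h] by fastforce
  qed
  ultimately show ?thesis by blast
qed

theorem theorem6p2:
  fixes \<kappa> :: "'k rel" and d :: nat
  assumes "Card_order \<kappa>" and "infinite (Field \<kappa>)"
    and "|Field \<kappa>| \<le>o |UNIV :: 'a set|"
    and "d \<ge> 2"
  shows "wchi_CF_sys TYPE('a) \<kappa> \<kappa> d = enat (d div 2 + 1)"
proof -
  define k where "k = d div 2"
  have "1 \<le> k" "2 * k \<le> d" "d \<le> 2 * k + 1" using \<open>d \<ge> 2\<close> by (auto simp: k_def)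
  have upper: "wchi_CF \<A> \<le> enat (Suc k)" if "lkm_system \<A> \<kappa> \<kappa> d" for \<A> :: "'a set set"
    using wCF_colorable_Suc_of_lkm_system[OF assms(1,2) that \<open>d \<le> 2 * k + 1\<close> \<open>1 \<le> k\<close>]
    by (rule wchi_CF_le)
  obtain \<A> :: "'a set set" where "lkm_system \<A> \<kappa> \<kappa> d" "wchi_CF \<A> = enat (Suc k)"
    using ex_lkm_system_wchi_CF_eq[OF assms(1-3) \<open>1 \<le> k\<close> \<open>2 * k \<le> d\<close> \<open>d \<le> 2 * k + 1\<close>] by blast
  then have "wchi_CF_sys TYPE('a) \<kappa> \<kappa> d = enat (Suc k)"
    unfolding wchi_CF_sys_def using upper by (intro antisym SUP_least) (auto intro: SUP_upper2)
  then show ?thesis by (simp add: k_def)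
qed

end
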